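(* There exists a two-player differentiable game with parameters $\theta=(x,y)\in\mathbb{R}\times\mathbb{R}$ which is a smooth market, whose losses $L^1,L^2$ are both coercive and analytic, which is nondegenerate, and whose only critical point is a strict maximum.
   Context: A differentiable game consists of $n$ players with parameters $\theta=(\theta^1,\dots,\theta^n)\in\mathbb{R}^d$, $\theta^i\in\mathbb{R}^{d_i}$, $\sum_i d_i=d$, and twice continuously differentiable losses $L^i:\mathbb{R}^d\to\mathbb{R}$. The simultaneous gradient is $\xi=(\nabla_{\theta^1}L^1,\dots,\nabla_{\theta^n}L^n)\in\mathbb{R}^d$, and the game Hessian is $H=\nabla\xi$ (the $d\times d$ matrix with blocks $\nabla_{\theta^j}\nabla_{\theta^i}L^i$). A critical point is a $\bar\theta$ with $\xi(\bar\theta)=0$. A critical point is a strict (local) maximum if $H(\bar\theta)\prec 0$, meaning $u^\top H(\bar\theta)u<0$ for all nonzero $u$. The game is a (smooth) market if $L^i(\theta)=L^i(\theta^i)+\sum_{j\ne i}g_{ij}(\theta^i,\theta^j)$ with $g_{ij}(\theta^i,\theta^j)+g_{ji}(\theta^j,\theta^i)=0$ for all $i,j$ (pairwise zero-sum interactions). A loss is coercive if $L^i(\theta)\to\infty$ as $\|\theta\|\to\infty$; the game is coercive if all its losses are. The game is nondegenerate if $H$ is invertible at every critical point. *)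

theory Defs
  imports "HOL-Analysis.Analysis"
begin

text \<open>Two-player differentiable games with scalar parameters theta = (x, y) in R x R.
  Player 1 controls x, player 2 controls y.  Losses are functions real \<times> real \<Rightarrow> real.\<close>

definition px :: "(real \<times> real \<Rightarrow> real) \<Rightarrow> real \<times> real \<Rightarrow> real" where
  "px f p = deriv (\<lambda>t. f (t, snd p)) (fst p)"

definition py :: "(real \<times> real \<Rightarrow> real) \<Rightarrow> real \<times> real \<Rightarrow> real" where
  "py f p = deriv (\<lambda>t. f (fst p, t)) (snd p)"

definition C1_fun :: "(real \<times> real \<Rightarrow> real) \<Rightarrow> bool" where
  "C1_fun f \<longleftrightarrow>
     (\<forall>x y. ((\<lambda>t. f (t, y)) has_real_derivative px f (x, y)) (at x)
          \<and> ((\<lambda>t. f (x, t)) has_real_derivative py f (x, y)) (at y))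
     \<and> continuous_on UNIV (px f) \<and> continuous_on UNIV (py f)"

definition C2_fun :: "(real \<times> real \<Rightarrow> real) \<Rightarrow> bool" where
  "C2_fun f \<longleftrightarrow> C1_fun f \<and> C1_fun (px f) \<and> C1_fun (py f)"

text \<open>Real analytic on R^2: locally the sum of an (absolutely, i.e. unconditionally)
  convergent double power series.\<close>
definition real_analytic2 :: "(real \<times> real \<Rightarrow> real) \<Rightarrow> bool" where
  "real_analytic2 f \<longleftrightarrow>
     (\<forall>x0 y0. \<exists>r>0. \<exists>a :: nat \<Rightarrow> nat \<Rightarrow> real.
        \<forall>x y. \<bar>x - x0\<bar> < r \<longrightarrow> \<bar>y - y0\<bar> < r \<longrightarrow>
          ((\<lambda>(i, j). a i j * (x - x0) ^ i * (y - y0) ^ j) has_sum f (x, y)) UNIV)"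

definition sim_grad :: "(real \<times> real \<Rightarrow> real) \<Rightarrow> (real \<times> real \<Rightarrow> real) \<Rightarrow> real \<times> real \<Rightarrow> real \<times> real" where
  "sim_grad L1 L2 p = (px L1 p, py L2 p)"

definition game_hessian :: "(real \<times> real \<Rightarrow> real) \<Rightarrow> (real \<times> real \<Rightarrow> real) \<Rightarrow> real \<times> real \<Rightarrow> real^2^2" where
  "game_hessian L1 L2 p =
     vector [vector [px (px L1) p, py (px L1) p],
             vector [px (py L2) p, py (py L2) p]]"

definition critical_point :: "(real \<times> real \<Rightarrow> real) \<Rightarrow> (real \<times> real \<Rightarrow> real) \<Rightarrow> real \<times> real \<Rightarrow> bool" where
  "critical_point L1 L2 p \<longleftrightarrow> sim_grad L1 L2 p = (0, 0)"

definition strict_max :: "(real \<times> real \<Rightarrow> real) \<Rightarrow> (real \<times> real \<Rightarrow> real) \<Rightarrow> real \<times> real \<Rightarrow> bool" where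
  "strict_max L1 L2 p \<longleftrightarrow> critical_point L1 L2 p \<and>
     (\<forall>u :: real^2. u \<noteq> 0 \<longrightarrow> u \<bullet> (game_hessian L1 L2 p *v u) < 0)"

definition nondegenerate :: "(real \<times> real \<Rightarrow> real) \<Rightarrow> (real \<times> real \<Rightarrow> real) \<Rightarrow> bool" where
  "nondegenerate L1 L2 \<longleftrightarrow> (\<forall>p. critical_point L1 L2 p \<longrightarrow> invertible (game_hessian L1 L2 p))"

definition coercive :: "(real \<times> real \<Rightarrow> real) \<Rightarrow> bool" where
  "coercive L \<longleftrightarrow> filterlim L at_top at_infinity"

definition is_market :: "(real \<times> real \<Rightarrow> real) \<Rightarrow> (real \<times> real \<Rightarrow> real) \<Rightarrow> bool" where
  "is_market L1 L2 \<longleftrightarrow>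
     (\<exists>(f1 :: real \<Rightarrow> real) (f2 :: real \<Rightarrow> real) (g12 :: real \<Rightarrow> real \<Rightarrow> real) (g21 :: real \<Rightarrow> real \<Rightarrow> real).
        (\<forall>x y. L1 (x, y) = f1 x + g12 x y \<and> L2 (x, y) = f2 y + g21 y x)
      \<and> (\<forall>a b. g12 a b + g21 b a = 0))"

end

theory Submission
  imports Defs "HOL-Real_Asymp.Real_Asymp"
begin

(* Take L1 = x^4 - x^2 + 3xy + y^2 and L2 = y^4 - y^2 - 3xy + x^2. The interaction terms
   3xy + y^2 - x^2 and x^2 - y^2 - 3xy cancel, so the game is a market, and the quartic terms
   make both losses coercive. With r = x^2 + y^2, pairing the simultaneous gradient
   (4x^3 - 2x + 3y, 4y^3 - 2y - 3x) with (x, y) and with (y, -x) shows that at a critical point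
   2(x^4 + y^4) = r and 3r = -4xy(x^2 - y^2); hence 3r <= r^2 <= r, so r = 0 and the origin is
   the only critical point. There the game Hessian is [[-2, 3], [-3, -2]], a rotation-scaling
   matrix with symmetric part -2I: invertible and negative definite. Smoothness and analyticity
   hold for all polynomials, the latter by binomial re-expansion around each point. *)

definition bipoly :: "(real \<times> nat \<times> nat) list \<Rightarrow> real \<times> real \<Rightarrow> real" where
  "bipoly ms p = (\<Sum>(c, i, j)\<leftarrow>ms. c * fst p ^ i * snd p ^ j)"

(* For i = 0 the truncated exponent i - 1 is harmless: the coefficient c * real i vanishes. *)
definition bipoly_dx :: "(real \<times> nat \<times> nat) list \<Rightarrow> (real \<times> nat \<times> nat) list" where
  "bipoly_dx = map (\<lambda>(c, i, j). (c * real i, i - 1, j))"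

definition bipoly_dy :: "(real \<times> nat \<times> nat) list \<Rightarrow> (real \<times> nat \<times> nat) list" where
  "bipoly_dy = map (\<lambda>(c, i, j). (c * real j, i, j - 1))"

lemma bipoly_Nil [simp]: "bipoly [] p = 0"
  by (simp add: bipoly_def)

lemma bipoly_Cons [simp]: "bipoly ((c, i, j) # ms) p = c * fst p ^ i * snd p ^ j + bipoly ms p"
  by (simp add: bipoly_def)

lemma bipoly_dx_Cons [simp]: "bipoly_dx ((c, i, j) # ms) = (c * real i, i - 1, j) # bipoly_dx ms"
  by (simp add: bipoly_dx_def)

lemma bipoly_dy_Cons [simp]: "bipoly_dy ((c, i, j) # ms) = (c * real j, i, j - 1) # bipoly_dy ms"
  by (simp add: bipoly_dy_def)

lemma bipoly_dx_Nil [simp]: "bipoly_dx [] = []" and bipoly_dy_Nil [simp]: "bipoly_dy [] = []"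
  by (simp_all add: bipoly_dx_def bipoly_dy_def)

lemma has_real_derivative_bipoly_x:
  "((\<lambda>t. bipoly ms (t, y)) has_real_derivative bipoly (bipoly_dx ms) (x, y)) (at x)"
proof (induction ms)
  case (Cons m ms)
  then show ?case
    by (cases m) (auto intro!: derivative_eq_intros)
qed simp

lemma has_real_derivative_bipoly_y:
  "((\<lambda>t. bipoly ms (x, t)) has_real_derivative bipoly (bipoly_dy ms) (x, y)) (at y)"
proof (induction ms)
  case (Cons m ms)
  then show ?case
    by (cases m) (auto intro!: derivative_eq_intros)
qed simp

lemma px_eqI:
  assumes "\<And>x y. ((\<lambda>t. f (t, y)) has_real_derivative g (x, y)) (at x)"
  shows "px f = g"
  using assms by (auto simp: px_def fun_eq_iff intro: DERIV_imp_deriv)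

lemma py_eqI:
  assumes "\<And>x y. ((\<lambda>t. f (x, t)) has_real_derivative g (x, y)) (at y)"
  shows "py f = g"
  using assms by (auto simp: py_def fun_eq_iff intro: DERIV_imp_deriv)

lemma px_bipoly [simp]: "px (bipoly ms) = bipoly (bipoly_dx ms)"
  by (rule px_eqI) (rule has_real_derivative_bipoly_x)

lemma py_bipoly [simp]: "py (bipoly ms) = bipoly (bipoly_dy ms)"
  by (rule py_eqI) (rule has_real_derivative_bipoly_y)

lemma continuous_on_bipoly: "continuous_on UNIV (bipoly ms)"
proof (induction ms)
  case (Cons m ms)
  obtain c i j where m: "m = (c, i, j)"
    by (cases m)
  have "continuous_on UNIV (\<lambda>p :: real \<times> real. c * fst p ^ i * snd p ^ j)"
    by (intro continuous_intros)
  then show ?case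
    unfolding m bipoly_Cons[abs_def] using Cons.IH by (rule continuous_on_add)
qed (simp add: bipoly_Nil[abs_def])

lemma C1_fun_bipoly: "C1_fun (bipoly ms)"
  unfolding C1_fun_def
  by (simp add: has_real_derivative_bipoly_x has_real_derivative_bipoly_y continuous_on_bipoly)

lemma C2_fun_bipoly: "C2_fun (bipoly ms)"
  by (simp add: C2_fun_def C1_fun_bipoly)

lemma has_sum_finite_support:
  assumes "finite S" "\<And>k. k \<notin> S \<Longrightarrow> f k = 0"
  shows "(f has_sum sum f S) UNIV"
proof -
  have "(f has_sum sum f S) S"
    using assms(1) by (rule has_sum_finiteI) simp
  then show ?thesis
    using has_sum_cong_neutral[of UNIV S f f] assms(2) by auto
qed

lemma real_analytic2_monomial: "real_analytic2 (\<lambda>p. c * fst p ^ m * snd p ^ n)"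
  unfolding real_analytic2_def
proof (intro allI)
  fix x0 y0 :: real
  \<comment> \<open>binomial expansion of x = (x - x0) + x0 and y = (y - y0) + y0\<close>
  define a where "a k l = c * (of_nat (m choose k) * x0 ^ (m - k)) * (of_nat (n choose l) * y0 ^ (n - l))"
    for k l
  have "((\<lambda>(k, l). a k l * (x - x0) ^ k * (y - y0) ^ l) has_sum c * x ^ m * y ^ n) UNIV" for x y
  proof -
    let ?f = "\<lambda>(k, l). a k l * (x - x0) ^ k * (y - y0) ^ l"
    have "(?f has_sum sum ?f ({..m} \<times> {..n})) UNIV"
      by (rule has_sum_finite_support) (auto simp: a_def)
    also have "sum ?f ({..m} \<times> {..n}) =
        c * (\<Sum>k\<le>m. of_nat (m choose k) * (x - x0) ^ k * x0 ^ (m - k))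
          * (\<Sum>l\<le>n. of_nat (n choose l) * (y - y0) ^ l * y0 ^ (n - l))"
      by (simp add: a_def sum.cartesian_product[symmetric] sum_distrib_left sum_distrib_right
          algebra_simps)
    also have "\<dots> = c * x ^ m * y ^ n"
      using binomial_ring[of "x - x0" x0 m] binomial_ring[of "y - y0" y0 n] by simp
    finally show ?thesis .
  qed
  then show "\<exists>r>0. \<exists>a. \<forall>x y. \<bar>x - x0\<bar> < r \<longrightarrow> \<bar>y - y0\<bar> < r \<longrightarrow>
      ((\<lambda>(i, j). a i j * (x - x0) ^ i * (y - y0) ^ j) has_sum c * fst (x, y) ^ m * snd (x, y) ^ n) UNIV"
    by (intro exI[of _ 1] conjI exI[of _ a] allI impI) simp_all
qed

lemma real_analytic2_add:
  assumes "real_analytic2 f" "real_analytic2 g"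
  shows "real_analytic2 (\<lambda>p. f p + g p)"
  unfolding real_analytic2_def
proof (intro allI)
  fix x0 y0
  obtain r a where r: "r > 0" and a: "\<And>x y. \<bar>x - x0\<bar> < r \<Longrightarrow> \<bar>y - y0\<bar> < r \<Longrightarrow>
      ((\<lambda>(i, j). a i j * (x - x0) ^ i * (y - y0) ^ j) has_sum f (x, y)) UNIV"
    using assms(1) unfolding real_analytic2_def by meson
  obtain s b where s: "s > 0" and b: "\<And>x y. \<bar>x - x0\<bar> < s \<Longrightarrow> \<bar>y - y0\<bar> < s \<Longrightarrow>
      ((\<lambda>(i, j). b i j * (x - x0) ^ i * (y - y0) ^ j) has_sum g (x, y)) UNIV"
    using assms(2) unfolding real_analytic2_def by meson
  have "((\<lambda>(i, j). (a i j + b i j) * (x - x0) ^ i * (y - y0) ^ j) has_sum f (x, y) + g (x, y)) UNIV"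
    if "\<bar>x - x0\<bar> < min r s" "\<bar>y - y0\<bar> < min r s" for x y
    using has_sum_add[OF a b] that by (simp add: case_prod_unfold distrib_right)
  with r s show "\<exists>t>0. \<exists>d. \<forall>x y. \<bar>x - x0\<bar> < t \<longrightarrow> \<bar>y - y0\<bar> < t \<longrightarrow>
      ((\<lambda>(i, j). d i j * (x - x0) ^ i * (y - y0) ^ j) has_sum f (x, y) + g (x, y)) UNIV"
    by (intro exI[of _ "min r s"] conjI exI[of _ "\<lambda>i j. a i j + b i j"] allI impI) simp_all
qed

lemma real_analytic2_bipoly: "real_analytic2 (bipoly ms)"
proof (induction ms)
  case Nil
  show ?case
    using real_analytic2_monomial[of 0 0 0] by (simp add: bipoly_def)
next
  case (Cons m ms)
  obtain c i j where "m = (c, i, j)" by (cases m)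
  with real_analytic2_add[OF real_analytic2_monomial Cons.IH] show ?case
    by (simp add: bipoly_Cons[abs_def])
qed

lemma coercive_if_quadratic_lower_bound:
  fixes L :: "real \<times> real \<Rightarrow> real"
  assumes "c > 0" and "\<And>p. norm p ^ 2 - b \<le> c * L p"
  shows "coercive L"
proof -
  have "filterlim (\<lambda>r. (r ^ 2 - b) / c) at_top at_top"
    using \<open>c > 0\<close> by real_asymp
  then have "filterlim (\<lambda>p. (norm p ^ 2 - b) / c) at_top (at_infinity :: (real \<times> real) filter)"
    using filterlim_norm_at_top by (rule filterlim_compose)
  then show ?thesis
    unfolding coercive_def
    by (rule filterlim_at_top_mono) (simp add: assms pos_divide_le_eq mult.commute)
qed

lemma norm_Pair_square: "norm (x, y) ^ 2 = x ^ 2 + y ^ 2"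
  by (simp add: norm_Pair)

lemma inner_rotation_scaling_matrix:
  fixes u :: "real ^ 2"
  shows "u \<bullet> (vector [vector [a, b], vector [- b, a]] *v u) = a * (u \<bullet> u)"
  by (simp add: inner_vec_def matrix_vector_mult_def sum_2 algebra_simps)

lemma invertible_rotation_scaling_matrix:
  fixes a b :: real
  assumes "a \<noteq> 0"
  shows "invertible (vector [vector [a, b], vector [- b, a]] :: real ^ 2 ^ 2)"
  using assms by (simp add: invertible_det_nz det_2)

definition loss1 :: "real \<times> real \<Rightarrow> real" where
  "loss1 p = fst p ^ 4 - fst p ^ 2 + 3 * fst p * snd p + snd p ^ 2"

definition loss2 :: "real \<times> real \<Rightarrow> real" where
  "loss2 p = snd p ^ 4 - snd p ^ 2 - 3 * fst p * snd p + fst p ^ 2"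

lemma loss1_bipoly: "loss1 = bipoly [(1, 4, 0), (-1, 2, 0), (3, 1, 1), (1, 0, 2)]"
  by (simp add: fun_eq_iff loss1_def)

lemma loss2_bipoly: "loss2 = bipoly [(1, 0, 4), (-1, 0, 2), (-3, 1, 1), (1, 2, 0)]"
  by (simp add: fun_eq_iff loss2_def)

lemma is_market_loss: "is_market loss1 loss2"
  unfolding is_market_def
  by (intro exI[of _ "\<lambda>x. x ^ 4"] exI[of _ "\<lambda>y. y ^ 4"]
      exI[of _ "\<lambda>x y. 3 * x * y + y ^ 2 - x ^ 2"] exI[of _ "\<lambda>y x. x ^ 2 - y ^ 2 - 3 * x * y"])
     (simp add: loss1_def loss2_def)

lemma quartic_quadratic_lower_bound:
  fixes x y :: real
  shows "x ^ 2 + y ^ 2 - 18 \<le> 2 * (x ^ 4 - x ^ 2 + 3 * x * y + y ^ 2)"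
proof -
  have "0 \<le> (y + 3 * x) ^ 2 + 2 * (x ^ 2 - 3) ^ 2"
    by simp
  also have "\<dots> = 2 * (x ^ 4 - x ^ 2 + 3 * x * y + y ^ 2) - (x ^ 2 + y ^ 2 - 18)"
    by (simp add: power2_eq_square power4_eq_xxxx algebra_simps)
  finally show ?thesis
    by (simp only: diff_ge_0_iff_ge)
qed

lemma coercive_loss1: "coercive loss1"
proof (rule coercive_if_quadratic_lower_bound[where c = 2 and b = 18])
  show "norm p ^ 2 - 18 \<le> 2 * loss1 p" for p :: "real \<times> real"
    using quartic_quadratic_lower_bound[of "fst p" "snd p"]
    by (cases p) (simp add: norm_Pair_square loss1_def)
qed simp

lemma coercive_loss2: "coercive loss2"
  \<comment> \<open>loss2 (x, y) = loss1 (y, -x)\<close>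
proof (rule coercive_if_quadratic_lower_bound[where c = 2 and b = 18])
  show "norm p ^ 2 - 18 \<le> 2 * loss2 p" for p :: "real \<times> real"
    using quartic_quadratic_lower_bound[of "snd p" "- fst p"]
    by (cases p) (simp add: norm_Pair_square loss2_def add.commute mult.commute)
qed simp

lemma critical_point_loss_iff:
  "critical_point loss1 loss2 (x, y) \<longleftrightarrow> 4 * x ^ 3 - 2 * x + 3 * y = 0 \<and> 4 * y ^ 3 - 2 * y - 3 * x = 0"
  by (simp add: critical_point_def sim_grad_def loss1_bipoly loss2_bipoly algebra_simps)

lemma game_hessian_loss_origin:
  "game_hessian loss1 loss2 (0, 0) = vector [vector [-2, 3], vector [-3, -2]]"
  by (simp add: game_hessian_def loss1_bipoly loss2_bipoly)

lemma cubic_gradient_system_only_zero: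
  fixes x y :: real
  assumes e1: "4 * x ^ 3 - 2 * x + 3 * y = 0" and e2: "4 * y ^ 3 - 2 * y - 3 * x = 0"
  shows "x = 0 \<and> y = 0"
proof -
  define r where "r = x ^ 2 + y ^ 2"
  have radial: "2 * (x ^ 4 + y ^ 4) = r"
  proof -
    have "x * (4 * x ^ 3 - 2 * x + 3 * y) + y * (4 * y ^ 3 - 2 * y - 3 * x) = 0"
      using e1 e2 by simp
    then show ?thesis
      unfolding r_def by (simp add: algebra_simps power2_eq_square power3_eq_cube power4_eq_xxxx)
  qed
  have angular: "3 * r = - 4 * x * y * (x ^ 2 - y ^ 2)"
  proof -
    have "y * (4 * x ^ 3 - 2 * x + 3 * y) - x * (4 * y ^ 3 - 2 * y - 3 * x) = 0"
      using e1 e2 by simp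
    then show ?thesis
      unfolding r_def by (simp add: algebra_simps power2_eq_square power3_eq_cube)
  qed
  have "3 * r \<le> r ^ 2"
  proof -
    have "r ^ 2 - 3 * r = (2 * x * y + (x ^ 2 - y ^ 2)) ^ 2"
      unfolding angular unfolding r_def by (simp add: algebra_simps power2_eq_square)
    then show ?thesis
      by (metis diff_ge_0_iff_ge zero_le_power2)
  qed
  also have "r ^ 2 \<le> r"
  proof -
    have "2 * (x ^ 4 + y ^ 4) - r ^ 2 = (x ^ 2 - y ^ 2) ^ 2"
      unfolding r_def by (simp add: algebra_simps power2_eq_square power4_eq_xxxx)
    then show ?thesis
      using radial by (metis diff_ge_0_iff_ge zero_le_power2)
  qed
  finally have "r \<le> 0"
    by simp
  then show ?thesis
    unfolding r_def by (simp add: sum_power2_le_zero_iff)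
qed

lemma critical_point_loss_iff_origin: "critical_point loss1 loss2 q \<longleftrightarrow> q = (0, 0)"
proof -
  obtain x y where q: "q = (x, y)"
    by (cases q)
  have "critical_point loss1 loss2 (x, y) \<Longrightarrow> x = 0 \<and> y = 0"
    unfolding critical_point_loss_iff by (elim conjE) (rule cubic_gradient_system_only_zero)
  moreover have "critical_point loss1 loss2 (0, 0)"
    by (simp add: critical_point_loss_iff)
  ultimately show ?thesis
    unfolding q by blast
qed

lemma strict_max_loss_origin: "strict_max loss1 loss2 (0, 0)"
  unfolding strict_max_def critical_point_loss_iff_origin game_hessian_loss_origin
    inner_rotation_scaling_matrix
  by simp

lemma nondegenerate_loss: "nondegenerate loss1 loss2"
  unfolding nondegenerate_def critical_point_loss_iff_origin
  using invertible_rotation_scaling_matrix[of "-2" 3] by (simp add: game_hessian_loss_origin)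

theorem theorem1:
  shows "\<exists>L1 L2 :: real \<times> real \<Rightarrow> real.
     C2_fun L1 \<and> C2_fun L2 \<and>
     is_market L1 L2 \<and>
     coercive L1 \<and> coercive L2 \<and>
     real_analytic2 L1 \<and> real_analytic2 L2 \<and>
     nondegenerate L1 L2 \<and>
     (\<exists>p. strict_max L1 L2 p \<and> (\<forall>q. critical_point L1 L2 q \<longrightarrow> q = p))"
proof (intro exI conjI)
  show "C2_fun loss1" "C2_fun loss2"
    unfolding loss1_bipoly loss2_bipoly by (rule C2_fun_bipoly)+
  show "real_analytic2 loss1" "real_analytic2 loss2"
    unfolding loss1_bipoly loss2_bipoly by (rule real_analytic2_bipoly)+
  show "strict_max loss1 loss2 (0, 0)" "\<forall>q. critical_point loss1 loss2 q \<longrightarrow> q = (0, 0)"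
    by (simp_all add: strict_max_loss_origin critical_point_loss_iff_origin)
qed (fact is_market_loss coercive_loss1 coercive_loss2 nondegenerate_loss)+

end
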